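(* Let $m\ge3$ and let $\mathscr{P}$ be a symmetric irreducible transition probability tensor of order $m$ and dimension $2$. Then $\mathscr{P}$ has a unique stationary probability vector, namely $(\tfrac12,\tfrac12)^\top$.
   Context: $\mathscr{P}=(p_{i_1\cdots i_m})$ is a tensor of order $m$ and dimension $n$ with real entries indexed by $i_1,\dots,i_m\in\{1,\dots,n\}$; here $n=2$. It is symmetric if its entries are invariant under every permutation of indices. It is a transition probability tensor if $0\le p_{i_1\cdots i_m}\le1$ and $\sum_{i_1=1}^np_{i_1i_2\cdots i_m}=1$ for all $i_2,\dots,i_m$. The tensor is reducible if there is a nonempty proper subset $I\subset\{1,\dots,n\}$ such that $p_{i_1i_2\cdots i_m}=0$ for all $i_1\in I$ and all $i_2,\dots,i_m\notin I$. It is irreducible if it is not reducible. A stationary probability vector of $\mathscr{P}$ is a vector $z=(z_1,z_2)^\top$ with $z_1,z_2\ge0$ and $z_1+z_2=1$ such that $$\sum_{i_2,\dots,i_m=1}^2p_{ii_2\cdots i_m}z_{i_2}\cdots z_{i_m}=z_i\quad\text{for } i=1,2.$$ *)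

theory Defs
  imports Complex_Main "HOL-Library.Multiset"
begin

text \<open>A tensor of order m and dimension n is a function on index lists
  (i_1,...,i_m) with entries in {1..n}; values outside are irrelevant.\<close>

definition idx :: "nat \<Rightarrow> nat \<Rightarrow> nat list set" where
  "idx m n = {xs. length xs = m \<and> set xs \<subseteq> {1..n}}"

definition sym_tensor :: "(nat list \<Rightarrow> real) \<Rightarrow> nat \<Rightarrow> nat \<Rightarrow> bool" where
  "sym_tensor P m n \<longleftrightarrow>
     (\<forall>xs\<in>idx m n. \<forall>ys. mset ys = mset xs \<longrightarrow> P ys = P xs)"

definition transition_prob_tensor :: "(nat list \<Rightarrow> real) \<Rightarrow> nat \<Rightarrow> nat \<Rightarrow> bool" where
  "transition_prob_tensor P m n \<longleftrightarrow>
     (\<forall>xs\<in>idx m n. 0 \<le> P xs \<and> P xs \<le> 1) \<and>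
     (\<forall>rest\<in>idx (m - 1) n. (\<Sum>i\<in>{1..n}. P (i # rest)) = 1)"

definition reducible_tensor :: "(nat list \<Rightarrow> real) \<Rightarrow> nat \<Rightarrow> nat \<Rightarrow> bool" where
  "reducible_tensor P m n \<longleftrightarrow>
     (\<exists>I. I \<noteq> {} \<and> I \<subset> {1..n} \<and>
        (\<forall>i\<in>I. \<forall>rest. length rest = m - 1 \<and> set rest \<subseteq> {1..n} - I \<longrightarrow> P (i # rest) = 0))"

definition irreducible_tensor :: "(nat list \<Rightarrow> real) \<Rightarrow> nat \<Rightarrow> nat \<Rightarrow> bool" where
  "irreducible_tensor P m n \<longleftrightarrow> \<not> reducible_tensor P m n"

definition stationary_prob_vector ::
    "(nat list \<Rightarrow> real) \<Rightarrow> nat \<Rightarrow> nat \<Rightarrow> (nat \<Rightarrow> real) \<Rightarrow> bool" where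
  "stationary_prob_vector P m n z \<longleftrightarrow>
     (\<forall>i\<in>{1..n}. 0 \<le> z i) \<and> (\<Sum>i\<in>{1..n}. z i) = 1 \<and>
     (\<forall>i\<in>{1..n}. (\<Sum>rest\<in>idx (m - 1) n. P (i # rest) * prod_list (map z rest)) = z i)"

end

theory Submission
  imports Defs
begin

text \<open>Symmetry makes an entry of a dimension-2 tensor a function g(k) of the number k of
  indices equal to 1, and the column sums give g(k+1) + g(k) = 1, so 2 g(k) - 1 = c (-1)^k
  with c = 2 g(0) - 1. Expanding the stationarity equation with the multinomial theorem reduces
  it, for d = z2 - z1, to d = c d^(m-1) with |c| \<le> 1 and |d| \<le> 1. The only such
  equations with a solution d \<noteq> 0 are c = 1, and c = -1 with m - 1 even; irreducibility
  rules out both, since they make g(1) resp. g(m-1) vanish.\<close>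

lemma idx_0: "idx 0 n = {[]}"
  by (auto simp: idx_def)

lemma idx_Suc: "idx (Suc m) n = (\<lambda>(i, r). i # r) ` ({1..n} \<times> idx m n)"
proof
  show "idx (Suc m) n \<subseteq> (\<lambda>(i, r). i # r) ` ({1..n} \<times> idx m n)"
  proof
    fix xs assume "xs \<in> idx (Suc m) n"
    then obtain i r where "xs = i # r" "i \<in> {1..n}" "r \<in> idx m n"
      by (cases xs) (auto simp: idx_def)
    thus "xs \<in> (\<lambda>(i, r). i # r) ` ({1..n} \<times> idx m n)" by force
  qed
qed (auto simp: idx_def)

lemma sum_prod_list_idx:
  fixes w :: "nat \<Rightarrow> 'a::comm_semiring_1"
  shows "(\<Sum>r\<in>idx m n. prod_list (map w r)) = (\<Sum>i=1..n. w i) ^ m"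
proof (induction m)
  case 0
  thus ?case by (simp add: idx_0)
next
  case (Suc m)
  have "inj_on (\<lambda>(i, r). i # r) ({1..n} \<times> idx m n)"
    by (auto simp: inj_on_def)
  hence "(\<Sum>r\<in>idx (Suc m) n. prod_list (map w r)) = (\<Sum>(i, r)\<in>{1..n} \<times> idx m n. w i * prod_list (map w r))"
    unfolding idx_Suc by (subst sum.reindex) (auto simp: case_prod_beta)
  also have "\<dots> = (\<Sum>i=1..n. w i) * (\<Sum>r\<in>idx m n. prod_list (map w r))"
    by (simp add: sum.cartesian_product[symmetric] sum_product)
  finally show ?case using Suc by simp
qed

lemma prod_list_map_negate_at:
  fixes z :: "'b \<Rightarrow> 'a::comm_ring_1"
  shows "prod_list (map (z(a := - z a)) r) = (-1) ^ count (mset r) a * prod_list (map z r)"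
  by (induction r) auto

lemma sum_signed_prod_list_idx2:
  fixes z :: "nat \<Rightarrow> 'a::comm_ring_1"
  shows "(\<Sum>r\<in>idx m 2. (-1) ^ count (mset r) 1 * prod_list (map z r)) = (z 2 - z 1) ^ m"
  using sum_prod_list_idx[of "z(1 := - z 1)" m 2]
  by (simp add: prod_list_map_negate_at numeral_2_eq_2)

lemma mset_idx2_eq_replicate:
  assumes "xs \<in> idx m 2"
  shows "mset xs = mset (replicate (count (mset xs) 1) 1 @ replicate (m - count (mset xs) 1) (2::nat))"
proof -
  have set: "set xs \<subseteq> {1, 2}" and len: "length xs = m"
    using assms by (auto simp: idx_def)
  hence "count (mset xs) 1 + count (mset xs) 2 = m"
    by (induction xs arbitrary: m) auto
  moreover have "count (mset xs) x = 0" if "x \<noteq> 1" "x \<noteq> 2" for x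
    using set that by (auto simp: count_mset_0_iff)
  ultimately show ?thesis
    by (intro multiset_eqI) (auto simp: count_replicate_mset)
qed

definition ones_entry :: "(nat list \<Rightarrow> real) \<Rightarrow> nat \<Rightarrow> nat \<Rightarrow> real" where
  "ones_entry P m k = P (replicate k 1 @ replicate (m - k) 2)"

lemma sym_tensor_2_eq_ones_entry:
  assumes "sym_tensor P m 2" "xs \<in> idx m 2"
  shows "P xs = ones_entry P m (count (mset xs) 1)"
  using assms mset_idx2_eq_replicate[OF assms(2)]
  unfolding sym_tensor_def ones_entry_def by metis

lemma ones_entry_Suc_add:
  assumes "sym_tensor P m 2" "transition_prob_tensor P m 2" "k < m"
  shows "ones_entry P m (Suc k) + ones_entry P m k = 1"
proof -
  define r where "r = replicate k (1::nat) @ replicate (m - 1 - k) 2"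
  have r: "r \<in> idx (m - 1) 2" using assms(3) by (auto simp: r_def idx_def)
  hence "P (1 # r) + P (2 # r) = 1"
    using assms(2) unfolding transition_prob_tensor_def by (simp add: numeral_2_eq_2)
  moreover have "1 # r \<in> idx m 2" "2 # r \<in> idx m 2" using r assms(3) by (auto simp: idx_def)
  ultimately show ?thesis
    using assms(1) by (simp add: sym_tensor_2_eq_ones_entry r_def)
qed

lemma ones_entry_alternating:
  assumes "sym_tensor P m 2" "transition_prob_tensor P m 2" "k \<le> m"
  shows "ones_entry P m k = 1/2 + (P (replicate m 2) - 1/2) * (-1) ^ k"
  using assms(3)
proof (induction k)
  case 0
  thus ?case by (simp add: ones_entry_def)
next
  case (Suc k)
  thus ?case using ones_entry_Suc_add[OF assms(1,2), of k] by simp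
qed

lemma sym_transition_tensor_2_entry:
  assumes "sym_tensor P m 2" "transition_prob_tensor P m 2" "xs \<in> idx m 2"
  shows "P xs = 1/2 + (P (replicate m 2) - 1/2) * (-1) ^ count (mset xs) 1"
proof -
  have "count (mset xs) 1 \<le> m"
    using assms(3) count_le_size[of "mset xs" 1] by (simp add: idx_def)
  thus ?thesis using assms by (simp add: sym_tensor_2_eq_ones_entry ones_entry_alternating)
qed

lemma stationary_sums_2:
  assumes "sym_tensor P (Suc n) 2" "transition_prob_tensor P (Suc n) 2"
  defines "e \<equiv> P (replicate (Suc n) 2) - 1/2"
  shows "(\<Sum>r\<in>idx n 2. P (1 # r) * prod_list (map z r)) = (z 1 + z 2) ^ n / 2 - e * (z 2 - z 1) ^ n"
    and "(\<Sum>r\<in>idx n 2. P (2 # r) * prod_list (map z r)) = (z 1 + z 2) ^ n / 2 + e * (z 2 - z 1) ^ n"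
proof -
  have "i # r \<in> idx (Suc n) 2" if "i \<in> {1, 2}" "r \<in> idx n 2" for i r
    using that by (auto simp: idx_def)
  hence entries: "P (1 # r) = 1/2 - e * (-1) ^ count (mset r) 1"
    "P (2 # r) = 1/2 + e * (-1) ^ count (mset r) 1" if "r \<in> idx n 2" for r
    using that sym_transition_tensor_2_entry[OF assms(1,2)] by (simp_all add: e_def)
  have plain: "(\<Sum>r\<in>idx n 2. prod_list (map z r)) = (z 1 + z 2) ^ n"
    using sum_prod_list_idx[of z n 2] by (simp add: numeral_2_eq_2)
  have "(\<Sum>r\<in>idx n 2. P (1 # r) * prod_list (map z r)) =
      (\<Sum>r\<in>idx n 2. prod_list (map z r) / 2 - e * ((-1) ^ count (mset r) 1 * prod_list (map z r)))"
    by (rule sum.cong) (simp_all only: entries algebra_simps)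
  thus "(\<Sum>r\<in>idx n 2. P (1 # r) * prod_list (map z r)) = (z 1 + z 2) ^ n / 2 - e * (z 2 - z 1) ^ n"
    by (simp only: sum_subtractf sum_divide_distrib[symmetric] sum_distrib_left[symmetric]
        plain sum_signed_prod_list_idx2)
  have "(\<Sum>r\<in>idx n 2. P (2 # r) * prod_list (map z r)) =
      (\<Sum>r\<in>idx n 2. prod_list (map z r) / 2 + e * ((-1) ^ count (mset r) 1 * prod_list (map z r)))"
    by (rule sum.cong) (simp_all only: entries algebra_simps)
  thus "(\<Sum>r\<in>idx n 2. P (2 # r) * prod_list (map z r)) = (z 1 + z 2) ^ n / 2 + e * (z 2 - z 1) ^ n"
    by (simp only: sum.distrib sum_divide_distrib[symmetric] sum_distrib_left[symmetric]
        plain sum_signed_prod_list_idx2)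
qed

lemma irreducible_tensor_2_entry_nonzero:
  assumes "irreducible_tensor P (Suc n) 2" "{i, j} = {1, 2::nat}"
  shows "P (i # replicate n j) \<noteq> 0"
proof
  assume zero: "P (i # replicate n j) = 0"
  have "i = 1 \<and> j = 2 \<or> i = 2 \<and> j = 1"
    using assms(2) by (metis doubleton_eq_iff)
  moreover have "{1..2::nat} = {1, 2}" by auto
  ultimately have complement: "{1..2} - {i} = {j}" and "{i} \<subset> {1..2}"
    by auto
  have "rest = replicate n j" if "length rest = n" "set rest \<subseteq> {j}" for rest
    using that by (metis replicate_length_same singletonD subset_iff)
  hence "\<forall>i'\<in>{i}. \<forall>rest. length rest = Suc n - 1 \<and> set rest \<subseteq> {1..2} - {i} \<longrightarrow> P (i' # rest) = 0"
    using zero unfolding complement by auto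
  hence "reducible_tensor P (Suc n) 2"
    using \<open>{i} \<subset> {1..2}\<close> unfolding reducible_tensor_def by blast
  thus False using assms(1) by (simp add: irreducible_tensor_def)
qed

lemma fixed_point_power_eq_zero:
  fixes c d :: real
  assumes "d = c * d ^ n" "0 < n" "\<bar>c\<bar> \<le> 1" "\<bar>d\<bar> \<le> 1" "c \<noteq> 1" "c = -1 \<Longrightarrow> odd n"
  shows "d = 0"
proof (rule ccontr)
  assume "d \<noteq> 0"
  obtain k where n: "n = Suc k" using assms(2) by (cases n) auto
  hence one: "c * d ^ k = 1" using assms(1) \<open>d \<noteq> 0\<close> by (simp add: algebra_simps)
  have "\<bar>d\<bar> ^ k \<le> 1" using assms(4) by (simp add: power_le_one)
  hence "1 \<le> \<bar>c\<bar>"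
    using one by (metis abs_1 abs_ge_zero abs_mult mult_left_le power_abs)
  hence "c = -1" using assms(3,5) by (auto simp: abs_if split: if_splits)
  hence "even k" using assms(6) n by simp
  hence "0 \<le> d ^ k" by (simp add: zero_le_even_power)
  thus False using one \<open>c = -1\<close> by simp
qed

lemma stationary_prob_vector_2_iff:
  assumes "sym_tensor P (Suc n) 2" "transition_prob_tensor P (Suc n) 2"
  defines "c \<equiv> 2 * P (replicate (Suc n) 2) - 1"
  shows "stationary_prob_vector P (Suc n) 2 z \<longleftrightarrow>
    0 \<le> z 1 \<and> 0 \<le> z 2 \<and> z 1 + z 2 = 1 \<and> z 2 - z 1 = c * (z 2 - z 1) ^ n"
proof -
  let ?e = "P (replicate (Suc n) 2) - 1/2"
  have "{1..2::nat} = {1, 2}" by auto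
  hence "stationary_prob_vector P (Suc n) 2 z \<longleftrightarrow> 0 \<le> z 1 \<and> 0 \<le> z 2 \<and> z 1 + z 2 = 1 \<and>
      (z 1 + z 2) ^ n / 2 - ?e * (z 2 - z 1) ^ n = z 1 \<and> (z 1 + z 2) ^ n / 2 + ?e * (z 2 - z 1) ^ n = z 2"
    unfolding stationary_prob_vector_def
    \<comment> \<open>without \<open>del\<close>, simp turns the index 1 into Suc 0 before the sums can be rewritten\<close>
    by (simp add: stationary_sums_2[OF assms(1,2)] del: One_nat_def)
  also have "\<dots> \<longleftrightarrow> 0 \<le> z 1 \<and> 0 \<le> z 2 \<and> z 1 + z 2 = 1 \<and> z 2 - z 1 = c * (z 2 - z 1) ^ n"
    by (auto simp: c_def algebra_simps)
  finally show ?thesis .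
qed

lemma sym_irreducible_transition_tensor_2_coefficient:
  assumes "sym_tensor P (Suc n) 2" "irreducible_tensor P (Suc n) 2" "transition_prob_tensor P (Suc n) 2"
  defines "c \<equiv> 2 * P (replicate (Suc n) 2) - 1"
  shows "\<bar>c\<bar> \<le> 1" "c \<noteq> 1" "c = -1 \<Longrightarrow> odd n"
proof -
  have "replicate (Suc n) 2 \<in> idx (Suc n) 2" by (auto simp: idx_def)
  hence "0 \<le> P (replicate (Suc n) 2)" "P (replicate (Suc n) 2) \<le> 1"
    using assms(3) unfolding transition_prob_tensor_def by blast+
  thus "\<bar>c\<bar> \<le> 1" by (simp add: c_def)
  have "1 # replicate n 2 \<in> idx (Suc n) 2" "2 # replicate n 1 \<in> idx (Suc n) 2"
    by (auto simp: idx_def set_replicate_conv_if)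
  hence "P (1 # replicate n 2) = (1 - c) / 2" "P (2 # replicate n 1) = (1 + c * (-1) ^ n) / 2"
    using sym_transition_tensor_2_entry[OF assms(1,3)] by (simp_all add: c_def)
  moreover have "P (1 # replicate n 2) \<noteq> 0" "P (2 # replicate n 1) \<noteq> 0"
    using irreducible_tensor_2_entry_nonzero[OF assms(2), of 1 2]
      irreducible_tensor_2_entry_nonzero[OF assms(2), of 2 1]
    by (simp_all add: insert_commute)
  ultimately show "c \<noteq> 1" "c = -1 \<Longrightarrow> odd n"
    by (auto simp: neg_one_even_power)
qed

theorem corollary2p2:
  fixes P :: "nat list \<Rightarrow> real" and m :: nat
  assumes "m \<ge> 3"
    and "sym_tensor P m 2"
    and "irreducible_tensor P m 2"
    and "transition_prob_tensor P m 2"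
  shows "stationary_prob_vector P m 2 (\<lambda>i. 1/2) \<and>
         (\<forall>z. stationary_prob_vector P m 2 z \<longrightarrow> z 1 = 1/2 \<and> z 2 = 1/2)"
proof -
  obtain n where m: "m = Suc n" and n: "0 < n" using assms(1) by (cases m) auto
  note stationary_iff = stationary_prob_vector_2_iff[OF assms(2,4)[unfolded m], folded m]
  have "stationary_prob_vector P m 2 (\<lambda>i. 1/2)"
    using n by (simp add: stationary_iff)
  moreover have "z 1 = 1/2 \<and> z 2 = 1/2" if "stationary_prob_vector P m 2 z" for z
  proof -
    have z: "0 \<le> z 1" "0 \<le> z 2" "z 1 + z 2 = 1"
      and fixed_point: "z 2 - z 1 = (2 * P (replicate m 2) - 1) * (z 2 - z 1) ^ n"
      using that by (simp_all add: stationary_iff)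
    hence "\<bar>z 2 - z 1\<bar> \<le> 1" by (simp add: abs_le_iff)
    with fixed_point_power_eq_zero[OF fixed_point n] have "z 2 - z 1 = 0"
      using sym_irreducible_transition_tensor_2_coefficient[OF assms(2-4)[unfolded m], folded m]
      by simp
    thus ?thesis using z by simp
  qed
  ultimately show ?thesis by blast
qed

end
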